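(* Let $N\ge3$, $p>p_S$, and let $y^*$ be the unique solution of $y''+\alpha y'-y+y^p-m^2e^{2mt}y=0$ with $y(t)\to1$ as $t\to-\infty$. Then, with $\nu:=\min\{p-1,1\}$, \[ (y^* )'(t)=\frac{m}{2(N-1)-3\theta}e^{2mt}+O\big(e^{2m(1+\nu)t}\big)\quad(t\to-\infty). \]
   Context: $\theta:=\frac{2}{p-1}$, $m:=\{\theta(N-2-\theta)\}^{-1/2}$, $\alpha:=m(N-2-2\theta)$, $p_S:=\frac{N+2}{N-2}$. *)

theory Defs
  imports "HOL-Analysis.Analysis" "HOL-Library.Landau_Symbols"
begin

definition theta :: "real \<Rightarrow> real" where
  "theta p = 2 / (p - 1)"

definition mconst :: "nat \<Rightarrow> real \<Rightarrow> real" where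
  "mconst N p = (theta p * (real N - 2 - theta p)) powr (-1/2)"

definition alpha :: "nat \<Rightarrow> real \<Rightarrow> real" where
  "alpha N p = mconst N p * (real N - 2 - 2 * theta p)"

definition p_S :: "nat \<Rightarrow> real" where
  "p_S N = (real N + 2) / (real N - 2)"

end

theory Submission
  imports Defs "HOL-Real_Asymp.Real_Asymp"
begin

text \<open>
  Near \<open>t = -\<infinity>\<close> the deviation \<open>w = y - 1\<close> solves the damped linear equation
  \<open>w'' + \<alpha> w' + (p - 1) w = m\<^sup>2 e^(2mt) y - R\<close> with a Taylor remainder \<open>R = O(w\<^sup>2)\<close>.
  For a bounded solution of such an equation, a Lyapunov function (energy plus a small cross
  term \<open>c w w'\<close>) shows that a forcing of size \<open>O(e^(\<kappa>t))\<close> plus a sufficiently small multiple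
  of \<open>|w|\<close> gives \<open>|w| + |w'| = O(e^(\<kappa>t))\<close>. With \<open>\<kappa> = 2m\<close> this yields \<open>w = O(e^(2mt))\<close>;
  subtracting the particular solution \<open>c e^(2mt)\<close> of the linearized equation with forcing
  \<open>m\<^sup>2 e^(2mt)\<close> leaves a forcing \<open>O(e^(4mt))\<close>, so \<open>y' = 2mc e^(2mt) + O(e^(4mt))\<close>, and
  \<open>2mc = m / (2(N - 1) - 3\<theta>)\<close>. As \<open>\<nu> \<le> 1\<close>, the error \<open>O(e^(4mt))\<close> is at least as good as
  the claimed one.
\<close>

lemma DERIV_nonpos_imp_nonincreasing_below:
  fixes f f' :: "real \<Rightarrow> real"
  assumes "\<And>x. x \<le> b \<Longrightarrow> (f has_real_derivative f' x) (at x)"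
    and "\<And>x. x \<le> b \<Longrightarrow> f' x \<le> 0" and "s \<le> t" and "t \<le> b"
  shows "f t \<le> f s"
proof (rule DERIV_nonpos_imp_nonincreasing[OF \<open>s \<le> t\<close>])
  fix x assume "x \<le> t"
  then show "\<exists>y. (f has_real_derivative y) (at x) \<and> y \<le> 0"
    using assms(1,2)[of x] \<open>t \<le> b\<close> by auto
qed

definition powr_remainder_const :: "real \<Rightarrow> real" where
  "powr_remainder_const p = p * (p - 1) * ((1/2) powr (p - 2) + (3/2) powr (p - 2))"

lemma powr_remainder_const_pos: "p > 1 \<Longrightarrow> powr_remainder_const p > 0"
  unfolding powr_remainder_const_def by (intro mult_pos_pos add_pos_pos) auto

lemma powr_linearization_error:
  fixes p x :: real
  assumes "p > 1" "1/2 \<le> x" "x \<le> 3/2"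
  shows "\<bar>x powr p - 1 - p * (x - 1)\<bar> \<le> powr_remainder_const p * (x - 1)\<^sup>2"
proof (cases "x = 1")
  case False
  define d :: "nat \<Rightarrow> real \<Rightarrow> real" where
    "d n t = (if n = 0 then t powr p else if n = 1 then p * t powr (p - 1)
              else p * (p - 1) * t powr (p - 2))" for n t
  have deriv: "\<forall>n t. n < 2 \<and> 1/2 \<le> t \<and> t \<le> 3/2 \<longrightarrow> DERIV (d n) t :> d (Suc n) t"
  proof (intro allI impI)
    fix n :: nat and t :: real
    assume "n < 2 \<and> 1/2 \<le> t \<and> t \<le> 3/2"
    then have "n = 0 \<or> n = 1" "t > 0" by auto
    then show "DERIV (d n) t :> d (Suc n) t"
      by (elim disjE) (auto simp: d_def[abs_def] algebra_simps intro!: derivative_eq_intros)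
  qed
  obtain t where t: "if x < 1 then x < t \<and> t < 1 else 1 < t \<and> t < x"
    and taylor: "x powr p = (\<Sum>n<2. d n 1 / fact n * (x - 1) ^ n) + d 2 t / fact 2 * (x - 1) ^ 2"
    using Taylor[of 2 d "\<lambda>x. x powr p" "1/2" "3/2" 1 x, OF _ _ deriv] assms False by (auto simp: d_def[abs_def])
  have t_range: "1/2 \<le> t" "t \<le> 3/2" using t assms by (auto split: if_splits)
  have remainder: "x powr p - 1 - p * (x - 1) = p * (p - 1) * (t powr (p - 2) / 2) * (x - 1)\<^sup>2"
    using taylor by (simp add: d_def numeral_2_eq_2)
  have "t powr (p - 2) \<le> (1/2) powr (p - 2) + (3/2) powr (p - 2)"
  proof (cases "p \<ge> 2")
    case True
    then have "t powr (p - 2) \<le> (3/2) powr (p - 2)" using t_range by (intro powr_mono2) auto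
    then show ?thesis by (simp add: add_increasing)
  next
    case False
    then have "t powr (p - 2) \<le> (1/2) powr (p - 2)" using t_range by (intro powr_mono2') auto
    then show ?thesis by (simp add: add_increasing2)
  qed
  then have "t powr (p - 2) / 2 \<le> (1/2) powr (p - 2) + (3/2) powr (p - 2)"
    using powr_ge_zero[of t "p - 2"] by linarith
  then have "p * (p - 1) * (t powr (p - 2) / 2) * (x - 1)\<^sup>2 \<le> powr_remainder_const p * (x - 1)\<^sup>2"
    unfolding powr_remainder_const_def using assms(1) by (intro mult_right_mono mult_left_mono) auto
  moreover have "0 \<le> p * (p - 1) * (t powr (p - 2) / 2) * (x - 1)\<^sup>2"
    using assms(1) by simp
  ultimately show ?thesis unfolding remainder by linarith
qed simp

definition lyap_coupling :: "real \<Rightarrow> real \<Rightarrow> real" where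
  "lyap_coupling a b = 2 * a * b / (2 * b + a\<^sup>2)"

definition lyap_form :: "real \<Rightarrow> real \<Rightarrow> real \<Rightarrow> real \<Rightarrow> real" where
  "lyap_form a b x v = v\<^sup>2 + b * x\<^sup>2 + lyap_coupling a b * x * v"

definition lyap_form_deriv :: "real \<Rightarrow> real \<Rightarrow> real \<Rightarrow> real \<Rightarrow> real \<Rightarrow> real" where
  "lyap_form_deriv a b x v v' = 2 * v * v' + 2 * b * x * v + lyap_coupling a b * (v * v + x * v')"

definition lyap_rate :: "real \<Rightarrow> real \<Rightarrow> real" where
  "lyap_rate a b = min (a / 3) (lyap_coupling a b / 5)"

definition lyap_gain :: "real \<Rightarrow> real \<Rightarrow> real" where
  "lyap_gain a b = 2 / a + lyap_coupling a b / b"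

text \<open>A perturbation \<open>\<eta> |w|\<close> of the forcing with \<open>\<eta>\<close> up to this bound is absorbed by the
  dissipation of the Lyapunov form.\<close>
definition perturbation_tolerance :: "real \<Rightarrow> real \<Rightarrow> real" where
  "perturbation_tolerance a b = min 1 (3 * lyap_rate a b * b / (16 * lyap_gain a b))"

context
  fixes a b :: real
  assumes a_pos: "a > 0" and b_pos: "b > 0"
begin

lemma lyap_coupling_pos: "lyap_coupling a b > 0"
  unfolding lyap_coupling_def using a_pos b_pos by (simp add: add_pos_nonneg)

lemma lyap_coupling_eq: "lyap_coupling a b * (2 * b + a\<^sup>2) = 2 * a * b"
proof -
  have "2 * b + a\<^sup>2 > 0" using a_pos b_pos by (simp add: add_pos_nonneg)
  then show ?thesis unfolding lyap_coupling_def by simp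
qed

lemma lyap_coupling_sq_le: "(lyap_coupling a b)\<^sup>2 \<le> b / 2"
proof -
  define c where "c = lyap_coupling a b"
  have "8 * a\<^sup>2 * b \<le> (2 * b + a\<^sup>2)\<^sup>2"
    using zero_le_power2[of "2 * b - a\<^sup>2"] by (simp add: power2_eq_square algebra_simps)
  then have "c\<^sup>2 * (8 * a\<^sup>2 * b) \<le> (c * (2 * b + a\<^sup>2))\<^sup>2"
    by (simp add: mult_left_mono power_mult_distrib)
  also have "\<dots> = (b / 2) * (8 * a\<^sup>2 * b)"
    unfolding c_def lyap_coupling_eq by (simp add: power2_eq_square)
  finally show ?thesis
    unfolding c_def[symmetric] using a_pos b_pos by (simp add: mult_le_cancel_right)
qed

lemma lyap_form_lower: "v\<^sup>2 / 2 + 3 * b / 4 * x\<^sup>2 \<le> lyap_form a b x v"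
proof -
  define c where "c = lyap_coupling a b"
  have "- (c * x * v) \<le> v\<^sup>2 / 2 + c\<^sup>2 * x\<^sup>2 / 2"
    using zero_le_power2[of "v + c * x"] by (simp add: power2_eq_square algebra_simps)
  moreover have "c\<^sup>2 * x\<^sup>2 \<le> b / 2 * x\<^sup>2"
    unfolding c_def using lyap_coupling_sq_le by (intro mult_right_mono) auto
  ultimately show ?thesis unfolding lyap_form_def c_def[symmetric] by linarith
qed

lemma lyap_form_upper: "lyap_form a b x v \<le> 3 / 2 * v\<^sup>2 + 5 * b / 4 * x\<^sup>2"
proof -
  define c where "c = lyap_coupling a b"
  have "c * x * v \<le> v\<^sup>2 / 2 + c\<^sup>2 * x\<^sup>2 / 2"
    using zero_le_power2[of "v - c * x"] by (simp add: power2_eq_square algebra_simps)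
  moreover have "c\<^sup>2 * x\<^sup>2 \<le> b / 2 * x\<^sup>2"
    unfolding c_def using lyap_coupling_sq_le by (intro mult_right_mono) auto
  ultimately show ?thesis unfolding lyap_form_def c_def[symmetric] by linarith
qed

lemma lyap_rate_pos: "lyap_rate a b > 0"
  unfolding lyap_rate_def using a_pos lyap_coupling_pos by simp

lemma lyap_gain_pos: "lyap_gain a b > 0"
  unfolding lyap_gain_def using a_pos b_pos lyap_coupling_pos by (simp add: add_pos_pos)

lemma perturbation_tolerance_pos: "perturbation_tolerance a b > 0"
  unfolding perturbation_tolerance_def using b_pos lyap_rate_pos lyap_gain_pos by simp

lemma perturbation_tolerance_sq_le:
  "2 * lyap_gain a b * (perturbation_tolerance a b)\<^sup>2 \<le> 3 * lyap_rate a b * b / 8"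
proof -
  define \<eta> where "\<eta> = perturbation_tolerance a b"
  have "\<eta> \<le> 1" "\<eta> \<le> 3 * lyap_rate a b * b / (16 * lyap_gain a b)"
    unfolding \<eta>_def perturbation_tolerance_def by auto
  moreover have "\<eta>\<^sup>2 \<le> \<eta>"
    using perturbation_tolerance_pos \<open>\<eta> \<le> 1\<close> unfolding \<eta>_def[symmetric]
    by (simp add: power2_eq_square mult_left_le_one_le)
  ultimately have "\<eta>\<^sup>2 \<le> 3 * lyap_rate a b * b / (16 * lyap_gain a b)" by linarith
  then show ?thesis
    unfolding \<eta>_def[symmetric] using lyap_gain_pos by (simp add: field_simps)
qed

lemma lyap_form_deriv_le:
  "lyap_form_deriv a b x v (G - a * v - b * x)
     \<le> - (a / 2) * v\<^sup>2 - lyap_coupling a b * b / 4 * x\<^sup>2 + lyap_gain a b * G\<^sup>2"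
proof -
  define c where "c = lyap_coupling a b"
  have c_nonneg: "c \<ge> 0" unfolding c_def using lyap_coupling_pos by simp
  have "- (a * x * v) \<le> b / 2 * x\<^sup>2 + a\<^sup>2 / (2 * b) * v\<^sup>2"
  proof -
    have "0 \<le> (b * x + a * v)\<^sup>2 / (2 * b)" using b_pos by simp
    also have "\<dots> = b / 2 * x\<^sup>2 + a * x * v + a\<^sup>2 / (2 * b) * v\<^sup>2"
      using b_pos by (simp add: field_simps power2_eq_square)
    finally show ?thesis by linarith
  qed
  from mult_left_mono[OF this c_nonneg]
  have cross: "- (c * a * x * v) \<le> c * b / 2 * x\<^sup>2 + c * a\<^sup>2 / (2 * b) * v\<^sup>2"
    by (simp add: algebra_simps)
  have v_forcing: "2 * v * G \<le> a / 2 * v\<^sup>2 + 2 / a * G\<^sup>2"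
  proof -
    have "0 \<le> (a * v - 2 * G)\<^sup>2 / (2 * a)" using a_pos by simp
    also have "\<dots> = a / 2 * v\<^sup>2 - 2 * v * G + 2 / a * G\<^sup>2"
      using a_pos by (simp add: field_simps power2_eq_square)
    finally show ?thesis by linarith
  qed
  have "x * G \<le> b / 4 * x\<^sup>2 + 1 / b * G\<^sup>2"
  proof -
    have "0 \<le> (b * x - 2 * G)\<^sup>2 / (4 * b)" using b_pos by simp
    also have "\<dots> = b / 4 * x\<^sup>2 - x * G + 1 / b * G\<^sup>2"
      using b_pos by (simp add: field_simps power2_eq_square)
    finally show ?thesis by linarith
  qed
  from mult_left_mono[OF this c_nonneg]
  have x_forcing: "c * x * G \<le> c * b / 4 * x\<^sup>2 + c / b * G\<^sup>2"
    by (simp add: algebra_simps)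
  \<comment> \<open>the choice of \<open>c\<close> makes the \<open>v\<^sup>2\<close>-terms collapse to \<open>- a v\<^sup>2\<close>\<close>
  have "c + c * a\<^sup>2 / (2 * b) = a"
    using lyap_coupling_eq b_pos unfolding c_def[symmetric] by (simp add: field_simps)
  then have "c * v\<^sup>2 + c * a\<^sup>2 / (2 * b) * v\<^sup>2 = a * v\<^sup>2"
    by (metis distrib_right)
  moreover have "lyap_form_deriv a b x v (G - a * v - b * x)
      = - 2 * a * v\<^sup>2 + c * v\<^sup>2 - c * a * x * v - c * b * x\<^sup>2 + 2 * v * G + c * x * G"
    unfolding lyap_form_deriv_def c_def[symmetric] by (simp add: algebra_simps power2_eq_square)
  ultimately show ?thesis
    using cross v_forcing x_forcing unfolding lyap_gain_def c_def[symmetric] by (simp add: algebra_simps)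
qed

lemma lyap_form_dissipation:
  assumes "\<bar>G\<bar> \<le> C * e + perturbation_tolerance a b * \<bar>x\<bar>"
  shows "lyap_form_deriv a b x v (G - a * v - b * x)
           \<le> - (lyap_rate a b / 2) * lyap_form a b x v + 2 * lyap_gain a b * C\<^sup>2 * e\<^sup>2"
proof -
  define c \<delta> K \<eta> where "c = lyap_coupling a b" and "\<delta> = lyap_rate a b"
    and "K = lyap_gain a b" and "\<eta> = perturbation_tolerance a b"
  define V where "V = lyap_form a b x v"
  have \<delta>_pos: "\<delta> > 0" and K_pos: "K > 0"
    unfolding \<delta>_def K_def using lyap_rate_pos lyap_gain_pos .
  have rate: "\<delta> * V \<le> a / 2 * v\<^sup>2 + c * b / 4 * x\<^sup>2"
  proof -
    have "\<delta> * V \<le> \<delta> * 3 / 2 * v\<^sup>2 + \<delta> * 5 * b / 4 * x\<^sup>2"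
      using mult_left_mono[OF lyap_form_upper, of \<delta> x v] \<delta>_pos unfolding V_def
      by (simp add: algebra_simps)
    also have "\<dots> \<le> a / 2 * v\<^sup>2 + c * b / 4 * x\<^sup>2"
      using b_pos unfolding \<delta>_def c_def lyap_rate_def
      by (intro add_mono mult_right_mono) auto
    finally show ?thesis .
  qed
  have "G\<^sup>2 \<le> (C * e + \<eta> * \<bar>x\<bar>)\<^sup>2"
    using assms unfolding \<eta>_def by (metis abs_ge_zero order_trans power2_abs power_mono)
  also have "\<dots> \<le> 2 * C\<^sup>2 * e\<^sup>2 + 2 * \<eta>\<^sup>2 * x\<^sup>2"
    using zero_le_power2[of "C * e - \<eta> * \<bar>x\<bar>"] by (simp add: power2_eq_square algebra_simps)
  finally have "K * G\<^sup>2 \<le> K * (2 * C\<^sup>2 * e\<^sup>2 + 2 * \<eta>\<^sup>2 * x\<^sup>2)"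
    using K_pos by (simp add: mult_left_mono)
  then have forcing: "K * G\<^sup>2 \<le> 2 * K * C\<^sup>2 * e\<^sup>2 + 2 * K * \<eta>\<^sup>2 * x\<^sup>2"
    by (simp add: algebra_simps)
  from mult_right_mono[OF perturbation_tolerance_sq_le zero_le_power2[of x]]
  have "2 * K * \<eta>\<^sup>2 * x\<^sup>2 \<le> \<delta> / 2 * (3 * b / 4 * x\<^sup>2)"
    unfolding K_def \<eta>_def \<delta>_def by (simp add: algebra_simps)
  also have "\<dots> \<le> \<delta> / 2 * V"
  proof (rule mult_left_mono)
    show "3 * b / 4 * x\<^sup>2 \<le> V"
      using lyap_form_lower[of v x] zero_le_power2[of v] unfolding V_def by linarith
  qed (use \<delta>_pos in simp)
  finally have "2 * K * \<eta>\<^sup>2 * x\<^sup>2 \<le> \<delta> / 2 * V" .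
  then show ?thesis
    using lyap_form_deriv_le[of x v G] rate forcing
    unfolding V_def c_def \<delta>_def K_def \<eta>_def by linarith
qed

lemma lyap_form_le_imp_abs_le:
  assumes V_le: "lyap_form a b x v \<le> L * exp (2 * k * t)" and L_nonneg: "L \<ge> 0"
  shows "\<bar>x\<bar> \<le> sqrt ((2 + 4 / (3 * b)) * L) * exp (k * t)
         \<and> \<bar>v\<bar> \<le> sqrt ((2 + 4 / (3 * b)) * L) * exp (k * t)"
proof -
  define D where "D = (2 + 4 / (3 * b)) * L"
  have exp_double: "exp (2 * k * t) = (exp (k * t))\<^sup>2"
    by (simp add: power2_eq_square exp_add[symmetric])
  have abs_bound: "\<bar>z\<bar> \<le> sqrt D * exp (k * t)" if "z\<^sup>2 \<le> D * exp (2 * k * t)" for z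
  proof -
    have "\<bar>z\<bar> = sqrt (z\<^sup>2)" by simp
    also have "\<dots> \<le> sqrt (D * (exp (k * t))\<^sup>2)"
      using real_sqrt_le_mono[OF that[unfolded exp_double]] .
    also have "\<dots> = sqrt D * exp (k * t)" by (simp add: real_sqrt_mult)
    finally show ?thesis .
  qed
  have lower: "v\<^sup>2 / 2 + 3 * b / 4 * x\<^sup>2 \<le> L * exp (2 * k * t)"
    using lyap_form_lower V_le by (rule order_trans)
  have LE_nonneg: "0 \<le> L * exp (2 * k * t)" using L_nonneg by simp
  have "3 * b / 4 * x\<^sup>2 \<le> L * exp (2 * k * t)"
    using lower zero_le_power2[of v] by linarith
  then have "x\<^sup>2 \<le> 4 / (3 * b) * (L * exp (2 * k * t))"
    using b_pos by (simp add: field_simps)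
  also have "\<dots> \<le> D * exp (2 * k * t)"
    unfolding D_def using LE_nonneg by (simp add: algebra_simps)
  finally have x_bound: "\<bar>x\<bar> \<le> sqrt D * exp (k * t)" by (rule abs_bound)
  have "0 \<le> 3 * b / 4 * x\<^sup>2" using b_pos by simp
  then have "v\<^sup>2 \<le> 2 * (L * exp (2 * k * t))" using lower by linarith
  also have "\<dots> \<le> D * exp (2 * k * t)"
    unfolding D_def using LE_nonneg b_pos by (simp add: algebra_simps)
  finally have "\<bar>v\<bar> \<le> sqrt D * exp (k * t)" by (rule abs_bound)
  with x_bound show ?thesis unfolding D_def by blast
qed

end

lemma exp_weighted_subsolution_antimono:
  fixes V V' :: "real \<Rightarrow> real"
  assumes rq_nz: "r + q \<noteq> 0"
    and deriv: "\<And>t. t < T \<Longrightarrow> (V has_real_derivative V' t) (at t)"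
    and sub: "\<And>t. t < T \<Longrightarrow> V' t \<le> - r * V t + L * exp (q * t)"
    and "s \<le> t" "t < T"
  shows "exp (r * t) * V t - L / (r + q) * exp ((r + q) * t)
           \<le> exp (r * s) * V s - L / (r + q) * exp ((r + q) * s)"
proof (rule DERIV_nonpos_imp_nonincreasing_below[OF _ _ \<open>s \<le> t\<close> order.refl])
  fix x assume "x \<le> t"
  then have "x < T" using \<open>t < T\<close> by simp
  have "((\<lambda>x. exp (r * x) * V x - L / (r + q) * exp ((r + q) * x)) has_real_derivative
          exp (r * x) * r * V x + exp (r * x) * V' x - L / (r + q) * (exp ((r + q) * x) * (r + q))) (at x)"
    using deriv[OF \<open>x < T\<close>] rq_nz by (auto intro!: derivative_eq_intros)
  moreover have "L / (r + q) * (exp ((r + q) * x) * (r + q)) = exp (r * x) * (L * exp (q * x))"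
    using rq_nz by (simp add: distrib_right exp_add)
  ultimately show "((\<lambda>x. exp (r * x) * V x - L / (r + q) * exp ((r + q) * x)) has_real_derivative
          exp (r * x) * (V' x + r * V x - L * exp (q * x))) (at x)"
    by (simp add: algebra_simps)
  show "exp (r * x) * (V' x + r * V x - L * exp (q * x)) \<le> 0"
    using sub[OF \<open>x < T\<close>] by (simp add: mult_nonneg_nonpos)
qed

lemma bounded_exp_subsolution_bound:
  fixes V V' :: "real \<Rightarrow> real"
  assumes r_pos: "r > 0" and rq_pos: "r + q > 0"
    and deriv: "\<And>t. t < T \<Longrightarrow> (V has_real_derivative V' t) (at t)"
    and sub: "\<And>t. t < T \<Longrightarrow> V' t \<le> - r * V t + L * exp (q * t)"
    and bounded: "\<And>t. t < T \<Longrightarrow> V t \<le> B" and "t < T"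
  shows "V t \<le> L / (r + q) * exp (q * t)"
proof -
  define F where "F x = exp (r * x) * V x - L / (r + q) * exp ((r + q) * x)" for x
  have F_antimono: "F t \<le> F x" if "x \<le> t" for x
    unfolding F_def using rq_pos by (intro exp_weighted_subsolution_antimono[OF _ deriv sub that \<open>t < T\<close>]) auto
  have "F t \<le> 0"
  proof (rule tendsto_lowerbound)
    show "((\<lambda>x. exp (r * x) * B - L / (r + q) * exp ((r + q) * x)) \<longlongrightarrow> 0) at_bot"
    proof -
      have exp_to_0: "((\<lambda>x. exp (c * x)) \<longlongrightarrow> 0) at_bot" if "c > 0" for c :: real
        using that by real_asymp
      show ?thesis
        using tendsto_diff[OF tendsto_mult_left_zero[OF exp_to_0[OF r_pos], of B]
                              tendsto_mult_right_zero[OF exp_to_0[OF rq_pos], of "L / (r + q)"]]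
        by simp
    qed
    show "\<forall>\<^sub>F x in at_bot. F t \<le> exp (r * x) * B - L / (r + q) * exp ((r + q) * x)"
      unfolding eventually_at_bot_linorder
    proof (intro exI allI impI)
      fix x assume "x \<le> t"
      then have "F t \<le> F x" by (rule F_antimono)
      also have "\<dots> \<le> exp (r * x) * B - L / (r + q) * exp ((r + q) * x)"
        unfolding F_def using bounded \<open>x \<le> t\<close> \<open>t < T\<close> by simp
      finally show "F t \<le> exp (r * x) * B - L / (r + q) * exp ((r + q) * x)" .
    qed
  qed simp
  moreover have "exp ((r + q) * t) = exp (r * t) * exp (q * t)"
    by (simp add: distrib_right exp_add)
  ultimately have "exp (r * t) * V t \<le> exp (r * t) * (L / (r + q) * exp (q * t))"
    unfolding F_def by (simp add: algebra_simps)
  then show ?thesis by (rule mult_left_le_imp_le) simp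
qed


lemma damped_oscillator_exp_decay:
  fixes w w' w'' g :: "real \<Rightarrow> real"
  assumes a_pos: "a > 0" and b_pos: "b > 0" and k_pos: "k > 0"
    and w_deriv: "\<And>t. t < T \<Longrightarrow> (w has_real_derivative w' t) (at t)"
    and w'_deriv: "\<And>t. t < T \<Longrightarrow> (w' has_real_derivative w'' t) (at t)"
    and ode: "\<And>t. t < T \<Longrightarrow> w'' t + a * w' t + b * w t = g t"
    and forcing: "\<And>t. t < T \<Longrightarrow> \<bar>g t\<bar> \<le> C * exp (k * t) + perturbation_tolerance a b * \<bar>w t\<bar>"
    and w_bounded: "\<And>t. t < T \<Longrightarrow> \<bar>w t\<bar> \<le> B"
    and w'_bounded: "\<And>t. t < T \<Longrightarrow> \<bar>w' t\<bar> \<le> B"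
  obtains M where "\<And>t. t < T \<Longrightarrow> \<bar>w t\<bar> \<le> M * exp (k * t) \<and> \<bar>w' t\<bar> \<le> M * exp (k * t)"
proof -
  define V where "V t = lyap_form a b (w t) (w' t)" for t
  define \<delta> where "\<delta> = lyap_rate a b"
  define L where "L = 2 * lyap_gain a b * C\<^sup>2 / (\<delta> / 2 + 2 * k)"
  have \<delta>_pos: "\<delta> > 0" unfolding \<delta>_def using lyap_rate_pos a_pos b_pos .
  have L_nonneg: "L \<ge> 0"
    unfolding L_def using lyap_gain_pos[OF a_pos b_pos] \<delta>_pos k_pos by simp
  have exp_double: "exp (2 * k * t) = (exp (k * t))\<^sup>2" for t
    by (simp add: power2_eq_square exp_add[symmetric])
  have V_decay: "V t \<le> L * exp (2 * k * t)" if "t < T" for t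
    unfolding L_def
  proof (rule bounded_exp_subsolution_bound[where V' = "\<lambda>t. lyap_form_deriv a b (w t) (w' t) (w'' t)"
        and B = "3 / 2 * B\<^sup>2 + 5 * b / 4 * B\<^sup>2", OF _ _ _ _ _ that])
    show "\<delta> / 2 > 0" "\<delta> / 2 + 2 * k > 0" using \<delta>_pos k_pos by simp_all
    fix t assume "t < T"
    show "(V has_real_derivative lyap_form_deriv a b (w t) (w' t) (w'' t)) (at t)"
      unfolding V_def[abs_def] lyap_form_def lyap_form_deriv_def
      using w_deriv[OF \<open>t < T\<close>] w'_deriv[OF \<open>t < T\<close>]
      by (auto intro!: derivative_eq_intros simp: algebra_simps)
    have "w'' t = g t - a * w' t - b * w t" using ode[OF \<open>t < T\<close>] by linarith
    then show "lyap_form_deriv a b (w t) (w' t) (w'' t)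
               \<le> - (\<delta> / 2) * V t + 2 * lyap_gain a b * C\<^sup>2 * exp (2 * k * t)"
      using lyap_form_dissipation[OF a_pos b_pos forcing[OF \<open>t < T\<close>]]
      unfolding V_def \<delta>_def exp_double by simp
    have "(w t)\<^sup>2 \<le> B\<^sup>2" "(w' t)\<^sup>2 \<le> B\<^sup>2"
      using w_bounded[OF \<open>t < T\<close>] w'_bounded[OF \<open>t < T\<close>]
      by (auto simp: abs_le_square_iff[symmetric] intro: order_trans[OF abs_ge_zero])
    moreover from this(1) have "5 * b / 4 * (w t)\<^sup>2 \<le> 5 * b / 4 * B\<^sup>2"
      using b_pos by (intro mult_left_mono) auto
    ultimately show "V t \<le> 3 / 2 * B\<^sup>2 + 5 * b / 4 * B\<^sup>2"
      using lyap_form_upper[OF a_pos b_pos, of "w t" "w' t"] unfolding V_def by linarith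
  qed
  show ?thesis
  proof (rule that)
    fix t assume "t < T"
    show "\<bar>w t\<bar> \<le> sqrt ((2 + 4 / (3 * b)) * L) * exp (k * t)
          \<and> \<bar>w' t\<bar> \<le> sqrt ((2 + 4 / (3 * b)) * L) * exp (k * t)"
      using lyap_form_le_imp_abs_le[OF a_pos b_pos V_decay[OF \<open>t < T\<close>, unfolded V_def] L_nonneg] .
  qed
qed

lemma damped_integrating_factor_mono:
  fixes z' z'' :: "real \<Rightarrow> real"
  assumes a_pos: "a > 0"
    and z'_deriv: "\<And>t. t < T \<Longrightarrow> (z' has_real_derivative z'' t) (at t)"
    and damped: "\<And>t. t < T \<Longrightarrow> - H \<le> z'' t + a * z' t"
    and "s \<le> t" "t < T"
  shows "exp (a * s) * (z' s + H / a) \<le> exp (a * t) * (z' t + H / a)"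
proof -
  define P where "P x = - exp (a * x) * (z' x + H / a)" for x
  have "P t \<le> P s"
  proof (rule DERIV_nonpos_imp_nonincreasing_below[OF _ _ \<open>s \<le> t\<close> order.refl])
    fix x assume "x \<le> t"
    then have "x < T" using \<open>t < T\<close> by simp
    show "(P has_real_derivative - exp (a * x) * (z'' x + a * z' x + H)) (at x)"
      unfolding P_def using z'_deriv[OF \<open>x < T\<close>] a_pos
      by (auto intro!: derivative_eq_intros simp: algebra_simps)
    show "- exp (a * x) * (z'' x + a * z' x + H) \<le> 0"
      using damped[OF \<open>x < T\<close>] by simp
  qed
  then show ?thesis unfolding P_def by simp
qed

lemma bounded_damped_deriv_lower_bound:
  fixes z z' z'' :: "real \<Rightarrow> real"
  assumes a_pos: "a > 0" and H_nonneg: "H \<ge> 0"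
    and z_deriv: "\<And>t. t < T \<Longrightarrow> (z has_real_derivative z' t) (at t)"
    and z'_deriv: "\<And>t. t < T \<Longrightarrow> (z' has_real_derivative z'' t) (at t)"
    and damped: "\<And>t. t < T \<Longrightarrow> - H \<le> z'' t + a * z' t"
    and bounded: "\<And>t. t < T \<Longrightarrow> \<bar>z t\<bar> \<le> B" and "t0 < T"
  shows "- H / a \<le> z' t0"
proof (rule ccontr)
  assume "\<not> - H / a \<le> z' t0"
  define d where "d = - (z' t0 + H / a)"
  have d_pos: "d > 0" unfolding d_def using \<open>\<not> - H / a \<le> z' t0\<close> by simp
  have z'_le: "z' s \<le> - d" if "s \<le> t0" for s
  proof -
    have "exp (a * s) * (z' s + H / a) \<le> exp (a * t0) * (- d)"
      using damped_integrating_factor_mono[OF a_pos z'_deriv damped that \<open>t0 < T\<close>]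
      unfolding d_def by (simp add: add.commute)
    also have "\<dots> \<le> exp (a * s) * (- d)"
      using d_pos a_pos that by simp
    finally have "z' s + H / a \<le> - d" by (rule mult_left_le_imp_le) simp
    moreover have "H / a \<ge> 0" using H_nonneg a_pos by simp
    ultimately show ?thesis by linarith
  qed
  \<comment> \<open>so \<open>z\<close> grows at least linearly towards \<open>-\<infinity>\<close>, contradicting boundedness\<close>
  define s where "s = t0 - (2 * B + 1) / d"
  have "s \<le> t0" unfolding s_def using d_pos bounded[OF \<open>t0 < T\<close>] by simp
  have "z t0 + d * t0 \<le> z s + d * s"
  proof (rule DERIV_nonpos_imp_nonincreasing_below[OF _ _ \<open>s \<le> t0\<close> order.refl])
    fix x assume "x \<le> t0"
    then show "((\<lambda>t. z t + d * t) has_real_derivative z' x + d) (at x)"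
      using z_deriv \<open>t0 < T\<close> by (auto intro!: derivative_eq_intros)
    show "z' x + d \<le> 0" using z'_le[OF \<open>x \<le> t0\<close>] by simp
  qed
  moreover have "d * s = d * t0 - (2 * B + 1)" unfolding s_def using d_pos by (simp add: field_simps)
  moreover have "\<bar>z t0\<bar> \<le> B" "\<bar>z s\<bar> \<le> B" using bounded \<open>s \<le> t0\<close> \<open>t0 < T\<close> by auto
  ultimately show False by linarith
qed

lemma bounded_damped_deriv_bound:
  fixes z z' z'' :: "real \<Rightarrow> real"
  assumes a_pos: "a > 0"
    and z_deriv: "\<And>t. t < T \<Longrightarrow> (z has_real_derivative z' t) (at t)"
    and z'_deriv: "\<And>t. t < T \<Longrightarrow> (z' has_real_derivative z'' t) (at t)"
    and damped: "\<And>t. t < T \<Longrightarrow> \<bar>z'' t + a * z' t\<bar> \<le> H"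
    and bounded: "\<And>t. t < T \<Longrightarrow> \<bar>z t\<bar> \<le> B" and "t0 < T"
  shows "\<bar>z' t0\<bar> \<le> H / a"
proof -
  have H_nonneg: "H \<ge> 0" using damped[OF \<open>t0 < T\<close>] by linarith
  have "- H / a \<le> z' t0"
    using bounded_damped_deriv_lower_bound[OF a_pos H_nonneg z_deriv z'_deriv _ bounded \<open>t0 < T\<close>] damped
    by (force simp: abs_le_iff)
  moreover have "- H / a \<le> - z' t0"
  proof (rule bounded_damped_deriv_lower_bound[OF a_pos H_nonneg _ _ _ _ \<open>t0 < T\<close>,
        where z = "\<lambda>t. - z t" and z'' = "\<lambda>t. - z'' t" and B = B])
    fix t assume "t < T"
    show "((\<lambda>t. - z t) has_real_derivative - z' t) (at t)"
      using z_deriv[OF \<open>t < T\<close>] by (auto intro!: derivative_eq_intros)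
    show "((\<lambda>t. - z' t) has_real_derivative - z'' t) (at t)"
      using z'_deriv[OF \<open>t < T\<close>] by (auto intro!: derivative_eq_intros)
    show "- H \<le> - z'' t + a * - z' t" using damped[OF \<open>t < T\<close>] by (simp add: abs_le_iff)
    show "\<bar>- z t\<bar> \<le> B" using bounded[OF \<open>t < T\<close>] by simp
  qed
  ultimately show ?thesis by (simp add: abs_le_iff)
qed

definition correction_coeff :: "real \<Rightarrow> real \<Rightarrow> real \<Rightarrow> real" where
  "correction_coeff a m p = m\<^sup>2 / (4 * m\<^sup>2 + 2 * a * m + (p - 1))"

locale near_one_solution =
  fixes a m p T :: real and y y' y'' :: "real \<Rightarrow> real"
  assumes a_pos: "a > 0" and m_pos: "m > 0" and p_gt_1: "p > 1" and T_nonpos: "T \<le> 0"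
    and y_deriv: "\<And>t. t < T \<Longrightarrow> (y has_real_derivative y' t) (at t)"
    and y'_deriv: "\<And>t. t < T \<Longrightarrow> (y' has_real_derivative y'' t) (at t)"
    and ode: "\<And>t. t < T \<Longrightarrow>
      y'' t + a * y' t - y t + y t powr p - m\<^sup>2 * exp (2 * m * t) * y t = 0"
    and near_one: "\<And>t. t < T \<Longrightarrow> \<bar>y t - 1\<bar> \<le> 1/2"
    and near_one_tolerance: "\<And>t. t < T \<Longrightarrow>
      powr_remainder_const p * \<bar>y t - 1\<bar> \<le> perturbation_tolerance a (p - 1)"
begin

definition remainder :: "real \<Rightarrow> real" where
  "remainder t = y t powr p - 1 - p * (y t - 1)"

lemma linearized_ode:
  "t < T \<Longrightarrow> y'' t + a * y' t + (p - 1) * (y t - 1) = m\<^sup>2 * exp (2 * m * t) * y t - remainder t"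
  using ode[of t] unfolding remainder_def by (simp add: algebra_simps)

lemma exp_le_one: "t < T \<Longrightarrow> exp (2 * m * t) \<le> 1"
  using m_pos T_nonpos by (simp add: mult_nonneg_nonpos)

lemma y_range:
  assumes "t < T" shows "1/2 \<le> y t" and "y t \<le> 3/2"
  using abs_le_D1[OF near_one[OF assms]] abs_le_D2[OF near_one[OF assms]] by linarith+

lemma remainder_quadratic: "t < T \<Longrightarrow> \<bar>remainder t\<bar> \<le> powr_remainder_const p * (y t - 1)\<^sup>2"
  unfolding remainder_def using powr_linearization_error[OF p_gt_1 y_range] .

lemma remainder_small: "t < T \<Longrightarrow> \<bar>remainder t\<bar> \<le> perturbation_tolerance a (p - 1) * \<bar>y t - 1\<bar>"
proof -
  assume "t < T"
  have "powr_remainder_const p * (y t - 1)\<^sup>2 = (powr_remainder_const p * \<bar>y t - 1\<bar>) * \<bar>y t - 1\<bar>"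
    by (simp add: power2_eq_square)
  also have "\<dots> \<le> perturbation_tolerance a (p - 1) * \<bar>y t - 1\<bar>"
    using near_one_tolerance[OF \<open>t < T\<close>] by (rule mult_right_mono) simp
  finally show ?thesis using remainder_quadratic[OF \<open>t < T\<close>] by linarith
qed

lemma deriv_bounded:
  obtains B where "\<And>t. t < T \<Longrightarrow> \<bar>y' t\<bar> \<le> B"
proof
  fix t assume "t < T"
  define H where "H = 3/2 + (3/2) powr p + m\<^sup>2 * (3/2)"
  show "\<bar>y' t\<bar> \<le> H / a"
  proof (rule bounded_damped_deriv_bound[OF a_pos y_deriv y'_deriv _ _ \<open>t < T\<close>, where B = "3/2"])
    fix s assume "s < T"
    note y_range = y_range[OF \<open>s < T\<close>]
    have "y s powr p \<le> (3/2) powr p" using y_range p_gt_1 by (intro powr_mono2) auto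
    moreover have "m\<^sup>2 * exp (2 * m * s) * y s \<le> m\<^sup>2 * 1 * (3/2)"
      using y_range exp_le_one[of s] \<open>s < T\<close> by (intro mult_mono) auto
    moreover have "0 \<le> m\<^sup>2 * exp (2 * m * s) * y s" using y_range by simp
    moreover have "0 \<le> y s powr p" by simp
    ultimately show "\<bar>y'' s + a * y' s\<bar> \<le> H"
      using ode[OF \<open>s < T\<close>] y_range unfolding H_def by (intro abs_leI) linarith+
    show "\<bar>y s\<bar> \<le> 3/2" using y_range by simp
  qed
qed

lemma first_order_decay:
  obtains M where "\<And>t. t < T \<Longrightarrow> \<bar>y t - 1\<bar> \<le> M * exp (2 * m * t) \<and> \<bar>y' t\<bar> \<le> M * exp (2 * m * t)"
proof -
  obtain B where B: "\<And>t. t < T \<Longrightarrow> \<bar>y' t\<bar> \<le> B" using deriv_bounded by blast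
  show ?thesis
  proof (rule damped_oscillator_exp_decay[where w = "\<lambda>t. y t - 1" and w' = y' and w'' = y''
        and g = "\<lambda>t. m\<^sup>2 * exp (2 * m * t) * y t - remainder t" and C = "m\<^sup>2 * (3/2)"
        and B = "max (1/2) B" and a = a and b = "p - 1" and k = "2 * m" and T = T])
    show "a > 0" "p - 1 > 0" "2 * m > 0" using a_pos p_gt_1 m_pos by simp_all
    fix t assume "t < T"
    show "((\<lambda>t. y t - 1) has_real_derivative y' t) (at t)"
      using y_deriv[OF \<open>t < T\<close>] by (auto intro!: derivative_eq_intros)
    show "(y' has_real_derivative y'' t) (at t)" using y'_deriv[OF \<open>t < T\<close>] .
    show "y'' t + a * y' t + (p - 1) * (y t - 1) = m\<^sup>2 * exp (2 * m * t) * y t - remainder t"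
      using linearized_ode[OF \<open>t < T\<close>] .
    show "\<bar>y t - 1\<bar> \<le> max (1/2) B" "\<bar>y' t\<bar> \<le> max (1/2) B"
      using near_one[OF \<open>t < T\<close>] B[OF \<open>t < T\<close>] unfolding le_max_iff_disj by auto
    have "\<bar>m\<^sup>2 * exp (2 * m * t) * y t\<bar> = m\<^sup>2 * exp (2 * m * t) * y t"
      using y_range[OF \<open>t < T\<close>] by (simp add: abs_of_nonneg)
    also have "\<dots> \<le> m\<^sup>2 * exp (2 * m * t) * (3/2)"
      using y_range[OF \<open>t < T\<close>] by (intro mult_left_mono) auto
    finally show "\<bar>m\<^sup>2 * exp (2 * m * t) * y t - remainder t\<bar>
               \<le> m\<^sup>2 * (3/2) * exp (2 * m * t) + perturbation_tolerance a (p - 1) * \<bar>y t - 1\<bar>"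
      using abs_triangle_ineq4[of "m\<^sup>2 * exp (2 * m * t) * y t" "remainder t"]
        remainder_small[OF \<open>t < T\<close>] by (simp add: mult.commute mult.left_commute)
  qed (use that in blast)
qed

lemma correction_coeff_eq: "correction_coeff a m p * (4 * m\<^sup>2 + 2 * a * m + (p - 1)) = m\<^sup>2"
proof -
  have "4 * m\<^sup>2 + 2 * a * m + (p - 1) > 0" using a_pos m_pos p_gt_1 by (simp add: add_pos_pos)
  then show ?thesis unfolding correction_coeff_def by simp
qed

\<comment> \<open>\<open>c e^(2mt)\<close> with \<open>c = correction_coeff a m p\<close> solves the linearized equation with
  forcing \<open>m\<^sup>2 e^(2mt)\<close>, so subtracting it leaves the forcing \<open>m\<^sup>2 e^(2mt) (y - 1) - remainder\<close>\<close>
lemma corrected_linearized_ode: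
  assumes "t < T"
  defines "c \<equiv> correction_coeff a m p"
  shows "y'' t - 4 * m\<^sup>2 * c * exp (2 * m * t) + a * (y' t - 2 * m * c * exp (2 * m * t))
           + (p - 1) * (y t - 1 - c * exp (2 * m * t))
         = m\<^sup>2 * exp (2 * m * t) * (y t - 1) - remainder t"
proof -
  have "y'' t - 4 * m\<^sup>2 * c * exp (2 * m * t) + a * (y' t - 2 * m * c * exp (2 * m * t))
          + (p - 1) * (y t - 1 - c * exp (2 * m * t))
        = (y'' t + a * y' t + (p - 1) * (y t - 1))
          - c * (4 * m\<^sup>2 + 2 * a * m + (p - 1)) * exp (2 * m * t)"
    by (simp add: algebra_simps)
  also have "\<dots> = m\<^sup>2 * exp (2 * m * t) * (y t - 1) - remainder t"
    unfolding linearized_ode[OF assms(1)] c_def correction_coeff_eq by (simp add: algebra_simps)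
  finally show ?thesis .
qed

lemma corrected_forcing_bound:
  assumes "t < T" and y_dev: "\<bar>y t - 1\<bar> \<le> M * exp (2 * m * t)"
  shows "\<bar>m\<^sup>2 * exp (2 * m * t) * (y t - 1) - remainder t\<bar>
           \<le> (m\<^sup>2 * M + powr_remainder_const p * M\<^sup>2) * exp (4 * m * t)"
proof -
  have exp_4m: "exp (4 * m * t) = exp (2 * m * t) * exp (2 * m * t)"
    by (simp add: exp_add[symmetric])
  have "\<bar>m\<^sup>2 * exp (2 * m * t) * (y t - 1)\<bar> = m\<^sup>2 * exp (2 * m * t) * \<bar>y t - 1\<bar>"
    by (simp add: abs_mult)
  also have "\<dots> \<le> m\<^sup>2 * exp (2 * m * t) * (M * exp (2 * m * t))"
    using y_dev by (intro mult_left_mono) auto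
  finally have linear: "\<bar>m\<^sup>2 * exp (2 * m * t) * (y t - 1)\<bar> \<le> m\<^sup>2 * M * exp (4 * m * t)"
    unfolding exp_4m by (simp add: algebra_simps)
  have "(y t - 1)\<^sup>2 \<le> (M * exp (2 * m * t))\<^sup>2"
    using y_dev by (metis abs_ge_zero power2_abs power_mono)
  then have "powr_remainder_const p * (y t - 1)\<^sup>2 \<le> powr_remainder_const p * (M * exp (2 * m * t))\<^sup>2"
    using powr_remainder_const_pos[OF p_gt_1] by (simp add: mult_left_mono)
  then have "\<bar>remainder t\<bar> \<le> powr_remainder_const p * M\<^sup>2 * exp (4 * m * t)"
    using remainder_quadratic[OF assms(1)] unfolding exp_4m by (simp add: power2_eq_square algebra_simps)
  then show ?thesis
    using linear abs_triangle_ineq4[of "m\<^sup>2 * exp (2 * m * t) * (y t - 1)" "remainder t"]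
    by (simp add: distrib_right)
qed

lemma second_order_decay:
  obtains M where
    "\<And>t. t < T \<Longrightarrow> \<bar>y' t - 2 * m * correction_coeff a m p * exp (2 * m * t)\<bar> \<le> M * exp (4 * m * t)"
proof -
  define c where "c = correction_coeff a m p"
  obtain B where B: "\<And>t. t < T \<Longrightarrow> \<bar>y' t\<bar> \<le> B" using deriv_bounded by blast
  obtain M1 where M1: "\<And>t. t < T \<Longrightarrow> \<bar>y t - 1\<bar> \<le> M1 * exp (2 * m * t) \<and> \<bar>y' t\<bar> \<le> M1 * exp (2 * m * t)"
    using first_order_decay by blast
  show ?thesis
  proof (rule damped_oscillator_exp_decay[where w = "\<lambda>t. y t - 1 - c * exp (2 * m * t)"
        and w' = "\<lambda>t. y' t - 2 * m * c * exp (2 * m * t)"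
        and w'' = "\<lambda>t. y'' t - 4 * m\<^sup>2 * c * exp (2 * m * t)"
        and g = "\<lambda>t. m\<^sup>2 * exp (2 * m * t) * (y t - 1) - remainder t"
        and C = "m\<^sup>2 * M1 + powr_remainder_const p * M1\<^sup>2"
        and B = "max (1/2 + \<bar>c\<bar>) (B + 2 * m * \<bar>c\<bar>)" and a = a and b = "p - 1" and k = "4 * m"])
    show "a > 0" "p - 1 > 0" "4 * m > 0" using a_pos p_gt_1 m_pos by simp_all
    fix t assume "t < T"
    show "((\<lambda>t. y t - 1 - c * exp (2 * m * t)) has_real_derivative y' t - 2 * m * c * exp (2 * m * t)) (at t)"
      using y_deriv[OF \<open>t < T\<close>] by (auto intro!: derivative_eq_intros)
    show "((\<lambda>t. y' t - 2 * m * c * exp (2 * m * t)) has_real_derivative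
            y'' t - 4 * m\<^sup>2 * c * exp (2 * m * t)) (at t)"
      using y'_deriv[OF \<open>t < T\<close>] by (auto intro!: derivative_eq_intros simp: power2_eq_square)
    show "y'' t - 4 * m\<^sup>2 * c * exp (2 * m * t) + a * (y' t - 2 * m * c * exp (2 * m * t))
          + (p - 1) * (y t - 1 - c * exp (2 * m * t))
          = m\<^sup>2 * exp (2 * m * t) * (y t - 1) - remainder t"
      unfolding c_def by (rule corrected_linearized_ode[OF \<open>t < T\<close>])
    have e: "0 < exp (2 * m * t)" "exp (2 * m * t) \<le> 1" using exp_le_one[OF \<open>t < T\<close>] by simp_all
    have "\<bar>c * exp (2 * m * t)\<bar> \<le> \<bar>c\<bar>"
      using e by (simp add: abs_mult mult_right_le_one_le)
    then show "\<bar>y t - 1 - c * exp (2 * m * t)\<bar> \<le> max (1/2 + \<bar>c\<bar>) (B + 2 * m * \<bar>c\<bar>)"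
      using abs_triangle_ineq4[of "y t - 1" "c * exp (2 * m * t)"] near_one[OF \<open>t < T\<close>]
      by (intro order_trans[OF _ max.cobounded1]) linarith
    have "\<bar>2 * m * c * exp (2 * m * t)\<bar> \<le> 2 * m * \<bar>c\<bar>"
      using e m_pos by (simp add: abs_mult mult_right_le_one_le)
    then show "\<bar>y' t - 2 * m * c * exp (2 * m * t)\<bar> \<le> max (1/2 + \<bar>c\<bar>) (B + 2 * m * \<bar>c\<bar>)"
      using abs_triangle_ineq4[of "y' t" "2 * m * c * exp (2 * m * t)"] B[OF \<open>t < T\<close>]
      by (intro order_trans[OF _ max.cobounded2]) linarith
    have "0 \<le> perturbation_tolerance a (p - 1) * \<bar>y t - 1 - c * exp (2 * m * t)\<bar>"
      using perturbation_tolerance_pos[OF a_pos, of "p - 1"] p_gt_1 by simp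
    then show "\<bar>m\<^sup>2 * exp (2 * m * t) * (y t - 1) - remainder t\<bar>
        \<le> (m\<^sup>2 * M1 + powr_remainder_const p * M1\<^sup>2) * exp (4 * m * t)
          + perturbation_tolerance a (p - 1) * \<bar>y t - 1 - c * exp (2 * m * t)\<bar>"
      using corrected_forcing_bound[OF \<open>t < T\<close>] M1[OF \<open>t < T\<close>] by fastforce
  qed (use that in \<open>auto simp: c_def\<close>)
qed

end

lemma deriv_asymptotics_at_bot:
  fixes a m p T :: real and y y' y'' :: "real \<Rightarrow> real"
  assumes a_pos: "a > 0" and m_pos: "m > 0" and p_gt_1: "p > 1"
    and y_deriv: "\<And>t. t < T \<Longrightarrow> (y has_real_derivative y' t) (at t)"
    and y'_deriv: "\<And>t. t < T \<Longrightarrow> (y' has_real_derivative y'' t) (at t)"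
    and ode: "\<And>t. t < T \<Longrightarrow>
      y'' t + a * y' t - y t + y t powr p - m\<^sup>2 * exp (2 * m * t) * y t = 0"
    and y_lim: "(y \<longlongrightarrow> 1) at_bot"
  shows "(\<lambda>t. y' t - 2 * m * correction_coeff a m p * exp (2 * m * t)) \<in> O[at_bot](\<lambda>t. exp (4 * m * t))"
proof -
  define \<epsilon> where "\<epsilon> = min (1/2) (perturbation_tolerance a (p - 1) / powr_remainder_const p)"
  have K_pos: "powr_remainder_const p > 0" using powr_remainder_const_pos[OF p_gt_1] .
  have "\<epsilon> > 0"
    unfolding \<epsilon>_def using perturbation_tolerance_pos[OF a_pos, of "p - 1"] p_gt_1 K_pos by simp
  then obtain T1 where T1: "\<And>t. t \<le> T1 \<Longrightarrow> \<bar>y t - 1\<bar> < \<epsilon>"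
    using tendstoD[OF y_lim] unfolding eventually_at_bot_linorder dist_real_def by blast
  define T0 where "T0 = min (min T 0) T1"
  interpret near_one_solution a m p T0 y y' y''
  proof
    fix t assume "t < T0"
    then have "t < T" "\<bar>y t - 1\<bar> < \<epsilon>" using T1[of t] unfolding T0_def by auto
    then show "(y has_real_derivative y' t) (at t)" "(y' has_real_derivative y'' t) (at t)"
      "y'' t + a * y' t - y t + y t powr p - m\<^sup>2 * exp (2 * m * t) * y t = 0"
      using y_deriv y'_deriv ode by blast+
    show "\<bar>y t - 1\<bar> \<le> 1/2" using \<open>\<bar>y t - 1\<bar> < \<epsilon>\<close> unfolding \<epsilon>_def by simp
    have "\<bar>y t - 1\<bar> \<le> perturbation_tolerance a (p - 1) / powr_remainder_const p"
      using \<open>\<bar>y t - 1\<bar> < \<epsilon>\<close> unfolding \<epsilon>_def by simp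
    then show "powr_remainder_const p * \<bar>y t - 1\<bar> \<le> perturbation_tolerance a (p - 1)"
      using K_pos by (simp add: field_simps)
  qed (use a_pos m_pos p_gt_1 T0_def in auto)
  obtain M where M: "\<And>t. t < T0 \<Longrightarrow>
      \<bar>y' t - 2 * m * correction_coeff a m p * exp (2 * m * t)\<bar> \<le> M * exp (4 * m * t)"
    using second_order_decay by blast
  show ?thesis
  proof (rule bigoI[where c = M])
    show "\<forall>\<^sub>F t in at_bot. norm (y' t - 2 * m * correction_coeff a m p * exp (2 * m * t))
                         \<le> M * norm (exp (4 * m * t))"
      unfolding eventually_at_bot_linorder using M by (intro exI[of _ "T0 - 1"]) auto
  qed
qed

lemma exp_bigo_exp_at_bot:
  fixes c d :: real
  assumes "c \<le> d"
  shows "(\<lambda>t. exp (d * t)) \<in> O[at_bot](\<lambda>t. exp (c * t))"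
proof (rule bigoI[where c = 1])
  show "\<forall>\<^sub>F t in at_bot. norm (exp (d * t)) \<le> 1 * norm (exp (c * t))"
    unfolding eventually_at_bot_linorder
  proof (intro exI allI impI)
    fix t :: real assume "t \<le> 0"
    then have "d * t \<le> c * t" using assms by (simp add: mult_right_mono_neg)
    then show "norm (exp (d * t)) \<le> 1 * norm (exp (c * t))" by simp
  qed
qed

context
  fixes N :: nat and p :: real
  assumes N_ge_3: "N \<ge> 3" and supercritical: "p > p_S N"
begin

lemma supercritical_p_gt_1: "p > 1"
proof -
  have "(real N + 2) / (real N - 2) > 1" using N_ge_3 by (simp add: field_simps)
  then show ?thesis using supercritical unfolding p_S_def by simp
qed

lemma supercritical_theta_bounds: "theta p > 0" "2 * theta p < real N - 2"
proof -
  show "theta p > 0" unfolding theta_def using supercritical_p_gt_1 by simp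
  have "p * (real N - 2) > real N + 2"
    using supercritical N_ge_3 unfolding p_S_def by (simp add: divide_less_eq)
  then have "4 < (p - 1) * (real N - 2)" by (simp add: algebra_simps)
  then show "2 * theta p < real N - 2"
    unfolding theta_def using supercritical_p_gt_1 by (simp add: divide_less_eq mult.commute)
qed

lemma supercritical_mconst_sq: "(mconst N p)\<^sup>2 * (theta p * (real N - 2 - theta p)) = 1"
proof -
  define D where "D = theta p * (real N - 2 - theta p)"
  have "D > 0" unfolding D_def using supercritical_theta_bounds by simp
  have "(mconst N p)\<^sup>2 = D powr (-1/2) * D powr (-1/2)"
    unfolding mconst_def D_def[symmetric] by (simp add: power2_eq_square)
  also have "\<dots> = 1 / D" using \<open>D > 0\<close> by (simp add: powr_add[symmetric] powr_minus_divide)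
  finally show ?thesis using \<open>D > 0\<close> unfolding D_def[symmetric] by simp
qed

lemma supercritical_mconst_pos: "mconst N p > 0"
  unfolding mconst_def using supercritical_theta_bounds by simp

lemma supercritical_alpha_pos: "alpha N p > 0"
  unfolding alpha_def using supercritical_mconst_pos supercritical_theta_bounds by simp

lemma supercritical_correction_coeff:
  "2 * mconst N p * correction_coeff (alpha N p) (mconst N p) p
     = mconst N p / (2 * (real N - 1) - 3 * theta p)"
proof -
  define m \<theta> where "m = mconst N p" and "\<theta> = theta p"
  define Q where "Q = 2 * (real N - 1) - 3 * \<theta>"
  have "\<theta> * (p - 1) = 2" unfolding \<theta>_def theta_def using supercritical_p_gt_1 by (simp add: field_simps)
  moreover have "\<theta> * (2 * m\<^sup>2 * (real N - 2 - \<theta>)) = 2"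
    using supercritical_mconst_sq unfolding m_def \<theta>_def by (simp add: algebra_simps)
  ultimately have "p - 1 = 2 * m\<^sup>2 * (real N - 2 - \<theta>)"
    using supercritical_theta_bounds(1) unfolding \<theta>_def by (metis mult_left_cancel less_irrefl)
  then have denominator: "4 * m\<^sup>2 + 2 * alpha N p * m + (p - 1) = 2 * m\<^sup>2 * Q"
    unfolding alpha_def m_def[symmetric] \<theta>_def[symmetric] Q_def by (simp add: algebra_simps power2_eq_square)
  moreover have "m > 0" "Q > 0"
    using supercritical_mconst_pos supercritical_theta_bounds N_ge_3 unfolding m_def \<theta>_def Q_def by auto
  ultimately show ?thesis
    unfolding correction_coeff_def m_def[symmetric] \<theta>_def[symmetric] Q_def[symmetric] denominator
    by (simp add: power2_eq_square)
qed

end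

theorem lemma4p5:
  fixes N :: nat and p T :: real and y y' y'' :: "real \<Rightarrow> real"
  assumes "N \<ge> 3" and "p > p_S N"
    and "\<And>t. t < T \<Longrightarrow> (y has_real_derivative y' t) (at t)"
    and "\<And>t. t < T \<Longrightarrow> (y' has_real_derivative y'' t) (at t)"
    and "\<And>t. t < T \<Longrightarrow> y t > 0"
    and "\<And>t. t < T \<Longrightarrow> y'' t + alpha N p * y' t - y t + y t powr p
               - (mconst N p)\<^sup>2 * exp (2 * mconst N p * t) * y t = 0"
    and "(y \<longlongrightarrow> 1) at_bot"
  shows "(\<lambda>t. y' t - mconst N p / (2 * (real N - 1) - 3 * theta p) * exp (2 * mconst N p * t))
           \<in> O[at_bot](\<lambda>t. exp (2 * mconst N p * (1 + min (p - 1) 1) * t))"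
proof -
  define m where "m = mconst N p"
  have m_pos: "m > 0" unfolding m_def using supercritical_mconst_pos[OF assms(1,2)] .
  have "(\<lambda>t. y' t - 2 * m * correction_coeff (alpha N p) m p * exp (2 * m * t))
          \<in> O[at_bot](\<lambda>t. exp (4 * m * t))"
    unfolding m_def
    by (rule deriv_asymptotics_at_bot[OF supercritical_alpha_pos[OF assms(1,2)]
          supercritical_mconst_pos[OF assms(1,2)] supercritical_p_gt_1[OF assms(1,2)]
          assms(3,4,6,7)])
  also have "(\<lambda>t. exp (4 * m * t)) \<in> O[at_bot](\<lambda>t. exp (2 * m * (1 + min (p - 1) 1) * t))"
    using m_pos by (intro exp_bigo_exp_at_bot) simp
  finally show ?thesis
    unfolding m_def supercritical_correction_coeff[OF assms(1,2)] .
qed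

end
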